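(* Let $d\ge1$, $N\ge2$, $\alpha\ge1$, $P=(0,N)^d\cap\mathbb{Z}^d$, and let ALG process an arbitrary finite online sequence of sets $O_1\cap P,\dots,O_m\cap P$, where each $O_j\subseteq(0,N)^d$ is open, $\alpha$-fat, with $O_j\cap P\ne\emptyset$. Let $\mathcal{S}'$ be the set of indices $j$ such that $O_j\cap P$ was not hit (i.e. disjoint from ALG's current set $P'$) at its arrival. Then for every integer $l\ge0$ and every $p\in P$, the number of $j\in\mathcal{S}'$ with $\ell(O_j)=l$ and $p\in O_j$ is at most $(4\alpha+1)^d$.
   Context: A $d$-cube is an axis-parallel hypercube; width = side length. In-width of $O$: supremum of widths of $d$-cubes contained in $O$; out-width: infimum of widths of $d$-cubes containing $O$; a nonempty bounded open $O$ is $\alpha$-fat if out-width$(O)\le\alpha\cdot$in-width$(O)$. For a positive integer $i$, $\ell(i)$ is the largest $k\ge0$ with $2^k\mid i$; for $x\in P$, $\ell(x)=\min_i\ell(x_i)$; $\ell(O)=\max\{\ell(x):x\in O\cap P\}$. Algorithm ALG: start with $P'=\emptyset$; when $O\cap P$ arrives, if $O\cap P'\ne\emptyset$ do nothing, otherwise add to $P'$ all points of $O\cap P$ of level $\ell(O)$. *)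

theory Defs
  imports "HOL-Analysis.Analysis" "HOL-Computational_Algebra.Computational_Algebra"
begin

text \<open>Points of R^d are vectors of type real^'n, d = CARD('n).\<close>

definition dcube :: "real^'n \<Rightarrow> real \<Rightarrow> (real^'n) set" where
  "dcube a w = {y. \<forall>i. a$i \<le> y$i \<and> y$i \<le> a$i + w}"

definition in_width :: "(real^'n) set \<Rightarrow> real" where
  "in_width S = Sup {w. w > 0 \<and> (\<exists>a. dcube a w \<subseteq> S)}"

definition out_width :: "(real^'n) set \<Rightarrow> real" where
  "out_width S = Inf {w. w > 0 \<and> (\<exists>a. S \<subseteq> dcube a w)}"

definition fat :: "real \<Rightarrow> (real^'n) set \<Rightarrow> bool" where
  "fat \<alpha> S \<longleftrightarrow> S \<noteq> {} \<and> bounded S \<and> open S \<and> out_width S \<le> \<alpha> * in_width S"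

definition grid :: "nat \<Rightarrow> (real^'n) set" where
  "grid N = {x. \<forall>i. x$i \<in> \<int> \<and> 0 < x$i \<and> x$i < real N}"

definition lev_int :: "int \<Rightarrow> nat" where
  "lev_int i = multiplicity (2::int) i"

definition lev_pt :: "real^'n \<Rightarrow> nat" where
  "lev_pt x = Min (range (\<lambda>i. lev_int \<lfloor>x$i\<rfloor>))"

definition lev_set :: "nat \<Rightarrow> (real^'n) set \<Rightarrow> nat" where
  "lev_set N S = Max (lev_pt ` (S \<inter> grid N))"

text \<open>State of ALG (the set P') before the j-th object (0-based) arrives.\<close>
fun alg_state :: "nat \<Rightarrow> (nat \<Rightarrow> (real^'n) set) \<Rightarrow> nat \<Rightarrow> (real^'n) set" where
  "alg_state N Os 0 = {}"
| "alg_state N Os (Suc j) =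
     (let P' = alg_state N Os j in
      if Os j \<inter> grid N \<inter> P' \<noteq> {} then P'
      else P' \<union> {x \<in> Os j \<inter> grid N. lev_pt x = lev_set N (Os j)})"

definition unhit :: "nat \<Rightarrow> (nat \<Rightarrow> (real^'n) set) \<Rightarrow> nat \<Rightarrow> nat set" where
  "unhit N Os m = {j. j < m \<and> Os j \<inter> grid N \<inter> alg_state N Os j = {}}"

end

theory Submission
  imports Defs
begin

text \<open>
  For an unhit set \<open>O\<^sub>j\<close> of level \<open>l\<close>, ALG adds every grid point of \<open>O\<^sub>j\<close> of level \<open>l\<close> to \<open>P'\<close>,
  so choosing one such point \<open>q\<^sub>j\<close> per set gives distinct points for distinct unhit sets.
  All coordinates of \<open>q\<^sub>j\<close> are multiples of \<open>2\<^sup>l\<close>. A cube of width \<open>> 2\<^sup>l\<^sup>+\<^sup>1\<close> contains a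
  point with all coordinates multiples of \<open>2\<^sup>l\<^sup>+\<^sup>1\<close>, i.e. of level \<open>> l\<close>, so the in-width of
  \<open>O\<^sub>j\<close> is at most \<open>2\<^sup>l\<^sup>+\<^sup>1\<close>; by fatness every point of \<open>O\<^sub>j\<close>, in particular \<open>q\<^sub>j\<close>, is within
  \<open>\<alpha> 2\<^sup>l\<^sup>+\<^sup>1\<close> of \<open>p\<close> in each coordinate. At most \<open>(4\<alpha>+1)\<^sup>d\<close> points of \<open>2\<^sup>l \<int>\<^sup>d\<close> lie in that box.
\<close>

lemma grid_coord_floor:
  fixes x :: "real^'n"
  assumes "x \<in> grid N"
  shows "x$i = of_int \<lfloor>x$i\<rfloor>" and "\<lfloor>x$i\<rfloor> > 0"
proof -
  have "x$i \<in> \<int>" "0 < x$i" using assms unfolding grid_def by auto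
  then show "x$i = of_int \<lfloor>x$i\<rfloor>" "\<lfloor>x$i\<rfloor> > 0" by (auto elim!: Ints_cases)
qed

lemma finite_grid: "finite (grid N :: (real^'n) set)"
proof -
  let ?vec = "\<lambda>f. \<chi> i. real_of_int (f i) :: real^'n"
  have "grid N \<subseteq> ?vec ` PiE UNIV (\<lambda>_. {0..int N})"
  proof
    fix x :: "real^'n" assume x: "x \<in> grid N"
    have "x$i < real N" for i using x by (simp add: grid_def)
    then have "\<lfloor>x$i\<rfloor> \<le> \<lfloor>real N\<rfloor>" for i by (meson floor_mono less_imp_le)
    then have "\<lfloor>x$i\<rfloor> \<in> {0..int N}" for i
      using grid_coord_floor(2)[OF x, of i] by simp
    then have "(\<lambda>i. \<lfloor>x$i\<rfloor>) \<in> PiE UNIV (\<lambda>_. {0..int N})" by (simp add: PiE_UNIV_domain)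
    then show "x \<in> ?vec ` PiE UNIV (\<lambda>_. {0..int N})"
      using grid_coord_floor(1)[OF x] by (intro image_eqI[where x="\<lambda>i. \<lfloor>x$i\<rfloor>"]) (simp_all add: vec_eq_iff)
  qed
  then show ?thesis by (rule finite_subset) (intro finite_imageI finite_PiE, auto)
qed

lemma lev_pt_ge_iff: "k \<le> lev_pt (x::real^'n) \<longleftrightarrow> (\<forall>i. k \<le> lev_int \<lfloor>x$i\<rfloor>)"
  unfolding lev_pt_def by (subst Min_ge_iff) auto

lemma grid_coord_div_pow2_Ints:
  fixes x :: "real^'n"
  assumes "x \<in> grid N" and "l \<le> lev_pt x"
  shows "x$i / 2^l \<in> \<int>"
proof -
  have "l \<le> multiplicity 2 \<lfloor>x$i\<rfloor>" using assms(2) by (simp add: lev_pt_ge_iff lev_int_def)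
  then obtain k where "\<lfloor>x$i\<rfloor> = 2^l * k" by (meson dvdE multiplicity_dvd')
  then have "x$i / 2^l = of_int k" using grid_coord_floor(1)[OF assms(1), of i] by simp
  then show ?thesis by simp
qed

lemma lev_set_attained:
  assumes "S \<inter> grid N \<noteq> {}"
  shows "\<exists>x \<in> S \<inter> grid N. lev_pt x = lev_set N S"
proof -
  have "lev_set N S \<in> lev_pt ` (S \<inter> grid N)"
    unfolding lev_set_def using finite_grid assms by (intro Max_in) auto
  then show ?thesis by auto
qed

lemma lev_pt_le_lev_set: "x \<in> S \<inter> grid N \<Longrightarrow> lev_pt x \<le> lev_set N S"
  unfolding lev_set_def using finite_grid by (intro Max_ge) auto

lemma alg_state_mono: "j \<le> k \<Longrightarrow> alg_state N Os j \<subseteq> alg_state N Os k"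
proof (induction k)
  case (Suc k)
  then show ?case by (cases "j = Suc k") (auto simp: Let_def)
qed simp

lemma unhit_witness_inj_on:
  assumes "J \<subseteq> unhit N Os m"
    and "\<And>j. j \<in> J \<Longrightarrow> q j \<in> Os j \<inter> grid N \<and> lev_pt (q j) = lev_set N (Os j)"
  shows "inj_on q J"
proof -
  have no_repeat: "q a \<noteq> q b" if "a \<in> J" "b \<in> J" "a < b" for a b
  proof -
    have "Os a \<inter> grid N \<inter> alg_state N Os a = {}"
      using that(1) assms(1) by (auto simp: unhit_def)
    then have "q a \<in> alg_state N Os (Suc a)"
      using assms(2)[OF that(1)] by (auto simp: Let_def)
    also have "alg_state N Os (Suc a) \<subseteq> alg_state N Os b"
      using that(3) by (intro alg_state_mono) simp
    finally have "q a \<in> alg_state N Os b" .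
    moreover have "Os b \<inter> grid N \<inter> alg_state N Os b = {}"
      using that(2) assms(1) by (auto simp: unhit_def)
    moreover have "q b \<in> Os b \<inter> grid N" using assms(2)[OF that(2)] by simp
    ultimately show ?thesis by auto
  qed
  show ?thesis
  proof (rule inj_onI)
    fix a b assume "a \<in> J" "b \<in> J" "q a = q b"
    then show "a = b" using no_repeat[of a b] no_repeat[of b a] by (cases a b rule: linorder_cases) auto
  qed
qed

lemma int_ball_subset_Icc: "{k::int. \<bar>real_of_int k - c\<bar> \<le> r} \<subseteq> {\<lceil>c - r\<rceil>..\<lfloor>c + r\<rfloor>}"
  by (auto simp: abs_le_iff ceiling_le_iff le_floor_iff)

lemma card_int_ball_le:
  assumes "r \<ge> 0"
  shows "real (card {k::int. \<bar>real_of_int k - c\<bar> \<le> r}) \<le> 2 * r + 1"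
proof -
  define z where "z = \<lfloor>c + r\<rfloor> - \<lceil>c - r\<rceil> + 1"
  have "card {k::int. \<bar>real_of_int k - c\<bar> \<le> r} \<le> nat z"
    using card_mono[OF _ int_ball_subset_Icc] by (simp add: z_def)
  moreover have "real_of_int z \<le> 2 * r + 1"
    using of_int_floor_le[of "c + r"] le_of_int_ceiling[of "c - r"]
    by (simp add: z_def del: of_int_floor_le le_of_int_ceiling)
  then have "real (nat z) \<le> 2 * r + 1"
    using assms by (cases "z \<ge> 0") auto
  ultimately show ?thesis by (meson of_nat_le_iff order_trans)
qed

lemma card_scaled_lattice_box_le:
  fixes X :: "(real^'n) set" and p :: "real^'n"
  assumes "K > 0" and "r \<ge> 0"
    and lattice: "\<And>x i. x \<in> X \<Longrightarrow> x$i / K \<in> \<int>"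
    and box: "\<And>x i. x \<in> X \<Longrightarrow> \<bar>x$i - p$i\<bar> \<le> r * K"
  shows "real (card X) \<le> (2 * r + 1) ^ CARD('n)"
proof -
  define B where "B i = {k::int. \<bar>of_int k - p$i / K\<bar> \<le> r}" for i
  define \<phi> where "\<phi> x = (\<lambda>i. \<lfloor>x$i / K\<rfloor>)" for x :: "real^'n"
  have coord: "x$i = K * of_int (\<phi> x i)" if "x \<in> X" for x i
    using lattice[OF that, of i] \<open>K > 0\<close> by (auto simp: \<phi>_def field_simps elim!: Ints_cases)
  have "\<phi> x i \<in> B i" if "x \<in> X" for x i
  proof -
    have "of_int (\<phi> x i) = x$i / K" using coord[OF that, of i] \<open>K > 0\<close> by simp
    then have "\<bar>of_int (\<phi> x i) - p$i / K\<bar> = \<bar>x$i - p$i\<bar> / K"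
      using \<open>K > 0\<close> by (simp add: abs_divide flip: diff_divide_distrib)
    also have "\<dots> \<le> r" using box[OF that, of i] \<open>K > 0\<close> by (simp add: divide_le_eq)
    finally show ?thesis by (simp add: B_def)
  qed
  then have "\<phi> ` X \<subseteq> PiE UNIV B" by (auto simp: PiE_UNIV_domain)
  moreover have "inj_on \<phi> X" using coord by (intro inj_onI) (simp add: vec_eq_iff)
  moreover have "finite (B i)" for i
    unfolding B_def by (rule finite_subset[OF int_ball_subset_Icc]) simp
  ultimately have "card X \<le> card (PiE UNIV B)"
    by (intro card_inj_on_le finite_PiE) auto
  then have "real (card X) \<le> (\<Prod>i\<in>UNIV. real (card (B i)))"
    by (simp add: card_PiE flip: of_nat_prod)
  also have "\<dots> \<le> (\<Prod>i\<in>(UNIV::'n set). 2 * r + 1)"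
    using card_int_ball_le[OF \<open>r \<ge> 0\<close>] by (intro prod_mono) (simp add: B_def)
  finally show ?thesis by simp
qed

lemma open_contains_dcube:
  fixes S :: "(real^'n) set"
  assumes "open S" "p \<in> S"
  shows "\<exists>w>0. \<exists>a. dcube a w \<subseteq> S"
proof -
  obtain e where e: "e > 0" "ball p e \<subseteq> S" using assms open_contains_ball by blast
  define \<delta> where "\<delta> = e / (2 * real CARD('n))"
  have "\<delta> > 0" using e by (simp add: \<delta>_def)
  have "dcube (p - (\<chi> i. \<delta>)) \<delta> \<subseteq> ball p e"
  proof
    fix y assume y: "y \<in> dcube (p - (\<chi> i. \<delta>)) \<delta>"
    have "\<bar>(p - y)$i\<bar> \<le> \<delta>" for i
      using y[unfolded dcube_def, simplified, rule_format, of i] by (simp add: abs_le_iff)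
    then have "(\<Sum>i\<in>UNIV. \<bar>(p - y)$i\<bar>) \<le> (\<Sum>i\<in>(UNIV::'n set). \<delta>)" by (intro sum_mono)
    also have "\<dots> = e / 2" by (simp add: \<delta>_def)
    finally have "norm (p - y) < e" using norm_le_l1_cart[of "p - y"] e by linarith
    then show "y \<in> ball p e" by (simp add: dist_norm)
  qed
  then show ?thesis using e \<open>\<delta> > 0\<close> by blast
qed

lemma dcube_contains_multiple:
  fixes a :: "real^'n"
  assumes "M > 0" "M \<le> w"
  shows "(\<chi> i. M * of_int \<lceil>a$i / M\<rceil>) \<in> dcube a w"
proof -
  have "a$i \<le> M * of_int \<lceil>a$i / M\<rceil> \<and> M * of_int \<lceil>a$i / M\<rceil> \<le> a$i + w" for i
  proof -
    have "M * (a$i / M) \<le> M * of_int \<lceil>a$i / M\<rceil>" using \<open>M > 0\<close> by (intro mult_left_mono) auto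
    moreover have "M * of_int \<lceil>a$i / M\<rceil> < M * (a$i / M + 1)"
      using \<open>M > 0\<close> by (intro mult_strict_left_mono) linarith+
    ultimately show ?thesis using assms by (simp add: distrib_left)
  qed
  then show ?thesis by (simp add: dcube_def)
qed

lemma lev_pt_ge_of_multiples:
  fixes x :: "real^'n"
  assumes "\<And>i. x$i = 2^k * of_int (c i)" and "\<And>i. c i \<noteq> 0"
  shows "k \<le> lev_pt x"
  unfolding lev_pt_ge_iff
proof
  fix i
  have "\<lfloor>x$i\<rfloor> = 2^k * c i" using assms(1)[of i] by (metis floor_of_int of_int_numeral of_int_power of_int_mult)
  then show "k \<le> lev_int \<lfloor>x$i\<rfloor>"
    unfolding lev_int_def using assms(2) by (intro multiplicity_geI) auto
qed

lemma in_width_le_pow2: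
  fixes S :: "(real^'n) set"
  assumes "open S" "p \<in> S" "S \<subseteq> {x. \<forall>i. 0 < x$i \<and> x$i < real N}"
    and lev: "\<And>x. x \<in> S \<inter> grid N \<Longrightarrow> lev_pt x \<le> l"
  shows "in_width S \<le> 2^(l+1)"
  unfolding in_width_def
proof (rule cSup_least)
  show "{w. w > 0 \<and> (\<exists>a. dcube a w \<subseteq> S)} \<noteq> {}" using open_contains_dcube[OF assms(1,2)] by auto
next
  fix w assume "w \<in> {w. w > 0 \<and> (\<exists>a. dcube a w \<subseteq> S)}"
  then obtain a :: "real^'n" where a: "dcube a w \<subseteq> S" by auto
  show "w \<le> 2^(l+1)"
  proof (rule ccontr)
    assume "\<not> w \<le> 2^(l+1)"
    define c where "c i = \<lceil>a$i / 2^(l+1)\<rceil>" for i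
    define x :: "real^'n" where "x = (\<chi> i. 2^(l+1) * of_int (c i))"
    have x_nth: "x$i = 2^(l+1) * of_int (c i)" for i by (simp add: x_def)
    have "x \<in> S"
      using a dcube_contains_multiple[of "2^(l+1)" w a] \<open>\<not> w \<le> 2^(l+1)\<close>
      unfolding x_def c_def by auto
    then have pos: "0 < x$i" "x$i < real N" for i using assms(3) by auto
    have "x \<in> grid N" using pos by (simp add: grid_def x_nth)
    moreover have "c i \<noteq> 0" for i using pos(1)[of i] by (auto simp: x_nth)
    then have "l + 1 \<le> lev_pt x" using x_nth by (rule lev_pt_ge_of_multiples[rotated])
    ultimately show False using lev[of x] \<open>x \<in> S\<close> by simp
  qed
qed

lemma coord_dist_le_out_width:
  fixes S :: "(real^'n) set" and p q :: "real^'n"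
  assumes "bounded S" "p \<in> S" "q \<in> S"
  shows "\<bar>q$i - p$i\<bar> \<le> out_width S"
  unfolding out_width_def
proof (rule cInf_greatest)
  obtain r where r: "r > 0" "\<forall>y\<in>S. norm y \<le> r" using assms(1) bounded_pos by blast
  have bound: "- r \<le> y$j \<and> y$j \<le> r" if "y \<in> S" for y :: "real^'n" and j
  proof -
    have "\<bar>y$j\<bar> \<le> r" using r(2) that component_le_norm_cart order_trans by blast
    then show ?thesis by (simp add: abs_le_iff)
  qed
  have "S \<subseteq> dcube (\<chi> i. - r) (2 * r)"
  proof
    fix y assume "y \<in> S"
    then show "y \<in> dcube (\<chi> i. - r) (2 * r)" using bound[OF \<open>y \<in> S\<close>] by (simp add: dcube_def)
  qed
  moreover have "2 * r > 0" using r(1) by simp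
  ultimately show "{w. w > 0 \<and> (\<exists>a. S \<subseteq> dcube a w)} \<noteq> {}" by blast
next
  fix w assume "w \<in> {w. w > 0 \<and> (\<exists>a. S \<subseteq> dcube a w)}"
  then obtain a where "S \<subseteq> dcube a w" by auto
  then have "p \<in> dcube a w" "q \<in> dcube a w" using assms by auto
  then have "a$i \<le> p$i" "q$i \<le> a$i + w" "a$i \<le> q$i" "p$i \<le> a$i + w"
    by (simp_all add: dcube_def)
  then show "\<bar>q$i - p$i\<bar> \<le> w" by linarith
qed

lemma fat_coord_dist_le:
  fixes S :: "(real^'n) set" and p q :: "real^'n" and i :: 'n
  assumes "fat \<alpha> S" "\<alpha> \<ge> 0" "S \<subseteq> {x. \<forall>i. 0 < x$i \<and> x$i < real N}" "p \<in> S" "q \<in> S"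
  shows "\<bar>q$i - p$i\<bar> \<le> \<alpha> * 2^(lev_set N S + 1)"
proof -
  have "open S" "bounded S" and fat: "out_width S \<le> \<alpha> * in_width S"
    using assms(1) by (auto simp: fat_def)
  have "\<bar>q$i - p$i\<bar> \<le> out_width S" using coord_dist_le_out_width \<open>bounded S\<close> assms(4,5) .
  also have "\<dots> \<le> \<alpha> * in_width S" by (rule fat)
  also have "\<dots> \<le> \<alpha> * 2^(lev_set N S + 1)"
    using in_width_le_pow2[OF \<open>open S\<close> assms(4,3) lev_pt_le_lev_set] assms(2) by (rule mult_left_mono)
  finally show ?thesis .
qed

theorem mainTheorem6:
  fixes Os :: "nat \<Rightarrow> (real^'n) set" and N m :: nat and \<alpha> :: real
  assumes "N \<ge> 2" and "\<alpha> \<ge> 1"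
    and "\<And>j. j < m \<Longrightarrow> Os j \<subseteq> {x. \<forall>i. 0 < x$i \<and> x$i < real N}"
    and "\<And>j. j < m \<Longrightarrow> fat \<alpha> (Os j)"
    and "\<And>j. j < m \<Longrightarrow> Os j \<inter> grid N \<noteq> {}"
  shows "\<forall>l p. p \<in> grid N \<longrightarrow>
     real (card {j \<in> unhit N Os m. lev_set N (Os j) = l \<and> p \<in> Os j}) \<le> (4 * \<alpha> + 1) ^ CARD('n)"
proof (intro allI impI)
  fix l and p :: "real^'n"
  define J where "J = {j \<in> unhit N Os m. lev_set N (Os j) = l \<and> p \<in> Os j}"
  have J: "j < m" "lev_set N (Os j) = l" "p \<in> Os j" if "j \<in> J" for j
    using that by (auto simp: J_def unhit_def)
  define q where "q j = (SOME x. x \<in> Os j \<inter> grid N \<and> lev_pt x = lev_set N (Os j))" for j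
  have q: "q j \<in> Os j \<inter> grid N \<and> lev_pt (q j) = lev_set N (Os j)" if "j \<in> J" for j
    using lev_set_attained[OF assms(5)[OF J(1)[OF that]]] unfolding q_def by (rule someI2_bex) blast
  have "inj_on q J" by (rule unhit_witness_inj_on) (use q in \<open>auto simp: J_def\<close>)
  then have "card J = card (q ` J)" by (simp add: card_image)
  also have "real (card (q ` J)) \<le> (2 * (2 * \<alpha>) + 1) ^ CARD('n)"
  proof (rule card_scaled_lattice_box_le[where K = "2^l" and p = p])
    fix x :: "real^'n" and i assume "x \<in> q ` J"
    then obtain j where j: "j \<in> J" and x: "x = q j" by blast
    show "x$i / 2^l \<in> \<int>"
      using grid_coord_div_pow2_Ints[of x N l] q[OF j] J(2)[OF j] x by simp
    have "\<bar>x$i - p$i\<bar> \<le> \<alpha> * 2^(l + 1)"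
      using fat_coord_dist_le[OF assms(4)[OF J(1)[OF j]] _ assms(3)[OF J(1)[OF j]] J(3)[OF j]]
        q[OF j] J(2)[OF j] x assms(2) by simp
    then show "\<bar>x$i - p$i\<bar> \<le> 2 * \<alpha> * 2^l" by simp
  qed (use assms(2) in auto)
  finally show "real (card J) \<le> (4 * \<alpha> + 1) ^ CARD('n)" by simp
qed

end
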